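(* Let $\ell,r\in\mathcal{D}[0,\infty)$ with $\ell\le r$, let $c_0,c_0'\in\mathbb{R}$ and $\psi,\psi'\in\mathcal{D}[0,\infty)$, and suppose $(\phi,\eta)$ and $(\phi',\eta')$ solve the ESP on $[\ell(\cdot),r(\cdot)]$ for $c_0+\psi$ and $c_0'+\psi'$, respectively. If $\psi=\psi'+\nu$ for some non-decreasing $\nu\in\mathcal{D}[0,\infty)$ with $\nu(0)=0$, then for each $t\ge0$: (1) $\big[-[c_0-c_0']^+-\nu(t)\big]\vee\big[-(r(t)-\ell(t))\big]\le\phi'(t)-\phi(t)\le[c_0'-c_0]^+\wedge[r(t)-\ell(t)]$; (2) $\eta(t)-[c_0'-c_0]^+\le\eta'(t)\le\eta(t)+\nu(t)+[c_0-c_0']^+$.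
   Context: $\mathcal{D}[0,\infty)$ denotes the càdlàg functions $[0,\infty)\to(-\infty,\infty)$; $a\wedge b=\min\{a,b\}$, $a\vee b=\max\{a,b\}$, $a^+=a\vee0$. ESP: $(\phi,\eta)\in\mathcal{D}[0,\infty)^2$ solves the ESP on $[\ell(\cdot),r(\cdot)]$ for $\psi$ if (1) $\phi(t)=\psi(t)+\eta(t)\in[\ell(t),r(t)]$ for all $t\ge0$; (2) for all $0\le s\le t$: $\eta(t)-\eta(s)\ge0$ if $\phi(u)<r(u)$ for all $u\in(s,t]$, and $\eta(t)-\eta(s)\le0$ if $\phi(u)>\ell(u)$ for all $u\in(s,t]$; (3) for all $t\ge0$: $\eta(t)-\eta(t-)\ge0$ if $\phi(t)<r(t)$, and $\eta(t)-\eta(t-)\le0$ if $\phi(t)>\ell(t)$, where $\eta(0-)=0$. *)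

theory Defs
  imports "HOL-Analysis.Analysis"
begin

text \<open>Cadlag functions on [0,infinity) to the reals, represented as functions real => real;
  values at negative arguments are irrelevant.\<close>
definition cadlag :: "(real \<Rightarrow> real) \<Rightarrow> bool" where
  "cadlag f \<longleftrightarrow> (\<forall>t\<ge>0. continuous (at_right t) f) \<and>
                 (\<forall>t>0. \<exists>L. (f \<longlongrightarrow> L) (at_left t))"

text \<open>Left limit f(t-), with the convention f(0-) = 0.\<close>
definition left_lim :: "(real \<Rightarrow> real) \<Rightarrow> real \<Rightarrow> real" where
  "left_lim f t = (if t = 0 then 0 else Lim (at_left t) f)"

definition ESP :: "(real \<Rightarrow> real) \<Rightarrow> (real \<Rightarrow> real) \<Rightarrow> (real \<Rightarrow> real) \<Rightarrow> (real \<Rightarrow> real)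
                   \<Rightarrow> (real \<Rightarrow> real) \<Rightarrow> bool" where
  "ESP l r psi phi eta \<longleftrightarrow>
     cadlag phi \<and> cadlag eta \<and>
     (\<forall>t\<ge>0. phi t = psi t + eta t \<and> l t \<le> phi t \<and> phi t \<le> r t) \<and>
     (\<forall>s t. 0 \<le> s \<and> s \<le> t \<longrightarrow>
        ((\<forall>u\<in>{s<..t}. phi u < r u) \<longrightarrow> eta t - eta s \<ge> 0) \<and>
        ((\<forall>u\<in>{s<..t}. phi u > l u) \<longrightarrow> eta t - eta s \<le> 0)) \<and>
     (\<forall>t\<ge>0. (phi t < r t \<longrightarrow> eta t - left_lim eta t \<ge> 0) \<and>
             (phi t > l t \<longrightarrow> eta t - left_lim eta t \<le> 0))"

definition pos_part :: "real \<Rightarrow> real" where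
  "pos_part a = max a 0"

end

theory Submission
  imports Defs
begin

text \<open>Both bounds on \<open>\<eta>'\<close> come from one comparison principle: if \<open>\<psi>\<^sub>2 - \<psi>\<^sub>1 \<ge> c - w\<close>
  with \<open>w\<close> non-decreasing, then \<open>G = c + \<eta>\<^sub>2 - \<eta>\<^sub>1 - w\<close> never exceeds \<open>c\<^sup>+\<close>. Whenever \<open>G > c\<^sup>+\<close>
  we have \<open>\<phi>\<^sub>2 > \<phi>\<^sub>1\<close>, so \<open>\<phi>\<^sub>1\<close> is off the upper and \<open>\<phi>\<^sub>2\<close> off the lower barrier; there \<open>\<eta>\<^sub>1\<close> can
  only increase and \<open>\<eta>\<^sub>2\<close> only decrease, hence \<open>G\<close> cannot increase, neither continuously nor by
  a jump. Starting from the last time \<open>G\<close> was below \<open>c\<^sup>+\<close> gives a contradiction. It is applied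
  with \<open>w = \<nu>\<close>, and with the two solutions swapped and \<open>w = 0\<close>. The bounds on
  \<open>\<phi>' - \<phi>\<close> then follow from \<open>\<phi>' - \<phi> = c\<^sub>0' - c\<^sub>0 + \<eta>' - \<eta> - \<nu>\<close> and \<open>\<ell> \<le> \<phi>, \<phi>' \<le> r\<close>.\<close>

lemma le_level_if_nonincreasing_above:
  fixes G :: "real \<Rightarrow> real"
  assumes start: "G 0 \<le> a"
    and nonincreasing: "\<And>s t. 0 \<le> s \<Longrightarrow> s \<le> t \<Longrightarrow> (\<forall>u\<in>{s<..t}. a < G u) \<Longrightarrow> G t \<le> G s"
    and no_jump_up: "\<And>s. 0 < s \<Longrightarrow> a < G s \<Longrightarrow> \<exists>L. (G \<longlongrightarrow> L) (at_left s) \<and> G s \<le> L"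
    and "0 \<le> t"
  shows "G t \<le> a"
proof (rule ccontr)
  assume "\<not> G t \<le> a"
  define S where "S = {u \<in> {0..t}. G u \<le> a}"
  define s where "s = Sup S"
  have "0 \<in> S" using start \<open>0 \<le> t\<close> by (simp add: S_def)
  then have S_ne: "S \<noteq> {}" by blast
  have S_bdd: "bdd_above S" unfolding S_def by (rule bdd_aboveI[of _ t]) auto
  have "0 \<le> s" unfolding s_def using cSup_upper[OF \<open>0 \<in> S\<close> S_bdd] .
  have "s \<le> t" unfolding s_def by (rule cSup_least[OF S_ne]) (auto simp: S_def)
  have above: "a < G u" if "u \<in> {s<..t}" for u
  proof (rule ccontr)
    assume "\<not> a < G u"
    then have "u \<in> S" using that \<open>0 \<le> s\<close> by (auto simp: S_def)
    then have "u \<le> s" unfolding s_def using cSup_upper[OF _ S_bdd] by blast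
    with that show False by simp
  qed
  have "a < G s"
    using nonincreasing[OF \<open>0 \<le> s\<close> \<open>s \<le> t\<close>] above \<open>\<not> G t \<le> a\<close> by force
  with start \<open>0 \<le> s\<close> have "0 < s" by (cases "s = 0") auto
  then obtain L where "(G \<longlongrightarrow> L) (at_left s)" "G s \<le> L"
    using no_jump_up \<open>a < G s\<close> by blast
  with \<open>a < G s\<close> have "eventually (\<lambda>u. a < G u) (at_left s)"
    by (intro order_tendstoD(1)[of G L]) auto
  then obtain b where "b < s" and b_above: "\<And>u. b < u \<Longrightarrow> u < s \<Longrightarrow> a < G u"
    unfolding eventually_at_left_field by blast
  then obtain u where "u \<in> S" "b < u"
    unfolding s_def using less_cSup_iff[OF S_ne S_bdd] by blast
  moreover have "u \<le> s" unfolding s_def using cSup_upper[OF \<open>u \<in> S\<close> S_bdd] .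
  moreover have "u \<noteq> s" using \<open>u \<in> S\<close> \<open>a < G s\<close> by (auto simp: S_def)
  ultimately show False using b_above by (force simp: S_def)
qed

lemma left_lim_eqI: "0 < s \<Longrightarrow> (f \<longlongrightarrow> L) (at_left s) \<Longrightarrow> left_lim f s = L"
  by (simp add: left_lim_def tendsto_Lim)

lemma cadlag_tendsto_left_lim:
  "cadlag f \<Longrightarrow> 0 < s \<Longrightarrow> (f \<longlongrightarrow> left_lim f s) (at_left s)"
  unfolding cadlag_def using left_lim_eqI by blast

lemma mono_on_left_lim_le:
  assumes "cadlag w" "mono_on {0..} w" "0 < s"
  shows "left_lim w s \<le> w s"
proof (rule tendsto_upperbound[OF cadlag_tendsto_left_lim[OF assms(1,3)]])
  have "eventually (\<lambda>u. u \<in> {0<..<s}) (at_left s)"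
    using eventually_at_left_real[OF \<open>0 < s\<close>] .
  then show "eventually (\<lambda>u. w u \<le> w s) (at_left s)"
    by eventually_elim (use assms(2) in \<open>auto simp: mono_on_def\<close>)
qed simp

lemma mono_on_nonneg:
  fixes w :: "real \<Rightarrow> real"
  shows "mono_on {0..} w \<Longrightarrow> w 0 = 0 \<Longrightarrow> 0 \<le> t \<Longrightarrow> 0 \<le> w t"
  using mono_onD[of "{0..}" w 0 t] by simp

context
  fixes l r psi phi eta :: "real \<Rightarrow> real"
  assumes ESP: "ESP l r psi phi eta"
begin

lemma ESP_cadlag: "cadlag eta"
  using ESP by (simp add: ESP_def)

lemma ESP_eq: "0 \<le> t \<Longrightarrow> phi t = psi t + eta t"
  using ESP by (simp add: ESP_def)

lemma ESP_between: "0 \<le> t \<Longrightarrow> l t \<le> phi t \<and> phi t \<le> r t"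
  using ESP unfolding ESP_def by blast

lemma ESP_increasing_below_upper:
  "0 \<le> s \<Longrightarrow> s \<le> t \<Longrightarrow> \<forall>u\<in>{s<..t}. phi u < r u \<Longrightarrow> eta s \<le> eta t"
  using ESP unfolding ESP_def by force

lemma ESP_decreasing_above_lower:
  "0 \<le> s \<Longrightarrow> s \<le> t \<Longrightarrow> \<forall>u\<in>{s<..t}. l u < phi u \<Longrightarrow> eta t \<le> eta s"
  using ESP unfolding ESP_def by force

lemma ESP_jump_nonneg_below_upper: "0 \<le> t \<Longrightarrow> phi t < r t \<Longrightarrow> left_lim eta t \<le> eta t"
  using ESP unfolding ESP_def by force

lemma ESP_jump_nonpos_above_lower: "0 \<le> t \<Longrightarrow> l t < phi t \<Longrightarrow> eta t \<le> left_lim eta t"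
  using ESP unfolding ESP_def by force

end

lemma ESP_comparison:
  fixes l r psi1 psi2 phi1 eta1 phi2 eta2 w :: "real \<Rightarrow> real" and c t :: real
  assumes ESP1: "ESP l r psi1 phi1 eta1" and ESP2: "ESP l r psi2 phi2 eta2"
    and "cadlag w" "mono_on {0..} w" "w 0 = 0"
    and input_diff: "\<forall>u\<ge>0. c - w u \<le> psi2 u - psi1 u"
    and "0 \<le> t"
  shows "c + eta2 t - eta1 t - w t \<le> pos_part c"
proof -
  define G where "G u = c + eta2 u - eta1 u - w u" for u
  have off_barriers: "phi1 u < r u \<and> l u < phi2 u" if "0 \<le> u" "pos_part c < G u" for u
  proof -
    have "G u \<le> phi2 u - phi1 u"
      using input_diff ESP_eq[OF ESP1] ESP_eq[OF ESP2] that(1) by (simp add: G_def)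
    moreover have "0 \<le> pos_part c" by (simp add: pos_part_def)
    ultimately show ?thesis
      using ESP_between[OF ESP1 that(1)] ESP_between[OF ESP2 that(1)] that(2) by linarith
  qed
  have "G t \<le> pos_part c"
  proof (rule le_level_if_nonincreasing_above[where G = G])
    show "G 0 \<le> pos_part c"
    proof (rule ccontr)
      assume "\<not> G 0 \<le> pos_part c"
      with off_barriers have "0 \<le> eta1 0" "eta2 0 \<le> 0"
        using ESP_jump_nonneg_below_upper[OF ESP1, of 0]
          ESP_jump_nonpos_above_lower[OF ESP2, of 0] by (auto simp: left_lim_def)
      with \<open>w 0 = 0\<close> \<open>\<not> G 0 \<le> pos_part c\<close> show False by (simp add: G_def pos_part_def)
    qed
  next
    fix s t' assume "0 \<le> s" "s \<le> t'" "\<forall>u\<in>{s<..t'}. pos_part c < G u"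
    with off_barriers have "eta1 s \<le> eta1 t'" "eta2 t' \<le> eta2 s"
      using ESP_increasing_below_upper[OF ESP1] ESP_decreasing_above_lower[OF ESP2] by auto
    moreover have "w s \<le> w t'"
      using \<open>mono_on {0..} w\<close> \<open>0 \<le> s\<close> \<open>s \<le> t'\<close> by (auto simp: mono_on_def)
    ultimately show "G t' \<le> G s" by (simp add: G_def)
  next
    fix s assume "0 < s" "pos_part c < G s"
    let ?L = "c + left_lim eta2 s - left_lim eta1 s - left_lim w s"
    have "(G \<longlongrightarrow> ?L) (at_left s)"
      unfolding G_def using ESP_cadlag[OF ESP1] ESP_cadlag[OF ESP2] \<open>cadlag w\<close> \<open>0 < s\<close>
      by (intro tendsto_intros cadlag_tendsto_left_lim)
    moreover have "G s \<le> ?L"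
      using off_barriers[OF _ \<open>pos_part c < G s\<close>] \<open>0 < s\<close>
        ESP_jump_nonneg_below_upper[OF ESP1, of s] ESP_jump_nonpos_above_lower[OF ESP2, of s]
        mono_on_left_lim_le[OF \<open>cadlag w\<close> \<open>mono_on {0..} w\<close> \<open>0 < s\<close>]
      by (simp add: G_def)
    ultimately show "\<exists>L. (G \<longlongrightarrow> L) (at_left s) \<and> G s \<le> L" by blast
  qed fact
  then show ?thesis by (simp add: G_def)
qed

theorem proposition3p4:
  fixes l r psi psi' phi eta phi' eta' nu :: "real \<Rightarrow> real" and c0 c0' :: real
  assumes "cadlag l" and "cadlag r" and "\<forall>t\<ge>0. l t \<le> r t"
    and "cadlag psi" and "cadlag psi'"
    and "ESP l r (\<lambda>t. c0 + psi t) phi eta"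
    and "ESP l r (\<lambda>t. c0' + psi' t) phi' eta'"
    and "cadlag nu" and "mono_on {0..} nu" and "nu 0 = 0"
    and "\<forall>t\<ge>0. psi t = psi' t + nu t"
  shows "\<forall>t\<ge>0.
     max (- pos_part (c0 - c0') - nu t) (- (r t - l t)) \<le> phi' t - phi t \<and>
     phi' t - phi t \<le> min (pos_part (c0' - c0)) (r t - l t) \<and>
     eta t - pos_part (c0' - c0) \<le> eta' t \<and>
     eta' t \<le> eta t + nu t + pos_part (c0 - c0')"
proof (intro allI impI)
  fix t :: real assume "0 \<le> t"
  have zero_cadlag: "cadlag (\<lambda>_. 0::real)" by (auto simp: cadlag_def)
  have zero_mono: "mono_on {0..} (\<lambda>_. 0::real)" by (simp add: mono_on_def)
  have upper: "c0' - c0 + eta' t - eta t - nu t \<le> pos_part (c0' - c0)"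
    by (rule ESP_comparison[OF assms(6,7,8,9,10) _ \<open>0 \<le> t\<close>]) (use assms(11) in simp)
  have lower: "c0 - c0' + eta t - eta' t - 0 \<le> pos_part (c0 - c0')"
    by (rule ESP_comparison[OF assms(7,6) zero_cadlag zero_mono _ _ \<open>0 \<le> t\<close>])
      (use assms(9-11) mono_on_nonneg in auto)
  have "phi' t - phi t = c0' - c0 + eta' t - eta t - nu t"
    using ESP_eq[OF assms(6)] ESP_eq[OF assms(7)] assms(11) \<open>0 \<le> t\<close> by simp
  then show "max (- pos_part (c0 - c0') - nu t) (- (r t - l t)) \<le> phi' t - phi t \<and>
     phi' t - phi t \<le> min (pos_part (c0' - c0)) (r t - l t) \<and>
     eta t - pos_part (c0' - c0) \<le> eta' t \<and>
     eta' t \<le> eta t + nu t + pos_part (c0 - c0')"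
    using upper lower ESP_between[OF assms(6) \<open>0 \<le> t\<close>] ESP_between[OF assms(7) \<open>0 \<le> t\<close>]
    by (auto simp: pos_part_def)
qed

end
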